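(* Let $\tau$ be a signature, $\kappa$ an infinite cardinal, $s$ and $S^2_\kappa(\tau)$ as in the context. Let $\{\mathcal A_i:i\in I\}$ be a set of $\tau$-structures, for each $i\in I$ let $\overrightarrow{R^i_\kappa}=(R^i_k)_{k<\kappa}$ be relations of kind $s$ on $\mathcal A_i$, and put $U=\{\mathbf{tp}(\mathcal A_i,\overrightarrow{R^i_\kappa}):i\in I\}$. Let $J\subseteq I$, $\mathcal F$ an ultrafilter on $J$, $\mathcal A=\prod_{j\in J}\mathcal A_j/\mathcal F$, and $\overrightarrow{R_\kappa}$ the relations of kind $s$ on $\mathcal A$ given by $R_k=\prod_{j\in J}R^j_k/\mathcal F$ ($k<\kappa$). Then $\mathbf{tp}(\mathcal A,\overrightarrow{R_\kappa})\in\overline U$, where $\overline U$ is the topological closure of $U$ in $2^\lambda$. Furthermore, if $p\in\overline U$, then there exist a set $L\subseteq I$, an ultrafilter $\mathcal G$ on $L$, and relations $\overrightarrow{S^l_\kappa}$ of kind $s$ on $\mathcal A_l$ ($l\in L$) such that $\mathbf{tp}(\mathcal B,\overrightarrow{S_\kappa})=p$, where $\mathcal B=\prod_{l\in L}\mathcal A_l/\mathcal G$ and $S_k=\prod_{l\in L}S^l_k/\mathcal G$ for $k<\kappa$.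
   Context: Fix a sequence $s=(s_k)_{k<\kappa}$ of natural numbers in which each value occurs $\kappa$ many times. Let $X_k$ ($k<\kappa$) be new relation symbols with arity $s_k$, and $F$ the set of first-order sentences of signature $\tau\cup\{X_k:k<\kappa\}$; $|F|=\lambda$ with a fixed enumeration $F=\{\phi_\xi:\xi<\lambda\}$, so subsets of $F$ are identified with elements of $2^\lambda$ (product topology). A $\kappa$-2-type is a set $p\subseteq F$ such that every finite subset of $p$ has a model and for every $\phi\in F$ either $\phi\in p$ or $\neg\phi\in p$; $S^2_\kappa(\tau)$ is the set of $\kappa$-2-types with the subspace topology from $2^\lambda$. A tuple $(R_k)_{k<\kappa}$ of relations on a $\tau$-structure $\mathcal A$ is of kind $s$ if $R_k\subseteq A^{s_k}$ for all $k$, and $\mathbf{tp}(\mathcal A,(R_k)_{k<\kappa})=\{\phi\in F:\langle\mathcal A,R_k\rangle_{k<\kappa}\models\phi\}$ with $X_k$ interpreted by $R_k$. *)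

theory Defs
  imports "HOL-Analysis.Analysis" "HOL-Library.Equipollence"
begin

datatype 'f trm = Var nat | Fn 'f "'f trm list"

datatype ('f, 'r) fm =
    Eq "'f trm" "'f trm"
  | Rel 'r "'f trm list"
  | Neg "('f, 'r) fm"
  | Conj "('f, 'r) fm" "('f, 'r) fm"
  | Ex nat "('f, 'r) fm"

fun fv_trm :: "'f trm \<Rightarrow> nat set" where
  "fv_trm (Var n) = {n}"
| "fv_trm (Fn f ts) = (\<Union>t\<in>set ts. fv_trm t)"

primrec fv :: "('f, 'r) fm \<Rightarrow> nat set" where
  "fv (Eq t u) = fv_trm t \<union> fv_trm u"
| "fv (Rel r ts) = (\<Union>t\<in>set ts. fv_trm t)"
| "fv (Neg \<phi>) = fv \<phi>"
| "fv (Conj \<phi> \<psi>) = fv \<phi> \<union> fv \<psi>"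
| "fv (Ex x \<phi>) = fv \<phi> - {x}"

fun wf_trm :: "('f \<Rightarrow> nat) \<Rightarrow> 'f trm \<Rightarrow> bool" where
  "wf_trm arF (Var n) = True"
| "wf_trm arF (Fn f ts) = (length ts = arF f \<and> (\<forall>t\<in>set ts. wf_trm arF t))"

primrec wf_fm :: "('f \<Rightarrow> nat) \<Rightarrow> ('r \<Rightarrow> nat) \<Rightarrow> ('f, 'r) fm \<Rightarrow> bool" where
  "wf_fm arF arR (Eq t u) = (wf_trm arF t \<and> wf_trm arF u)"
| "wf_fm arF arR (Rel r ts) = (length ts = arR r \<and> (\<forall>t\<in>set ts. wf_trm arF t))"
| "wf_fm arF arR (Neg \<phi>) = wf_fm arF arR \<phi>"
| "wf_fm arF arR (Conj \<phi> \<psi>) = (wf_fm arF arR \<phi> \<and> wf_fm arF arR \<psi>)"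
| "wf_fm arF arR (Ex x \<phi>) = wf_fm arF arR \<phi>"

record ('a, 'f, 'r) struc =
  univ :: "'a set"
  funs :: "'f \<Rightarrow> 'a list \<Rightarrow> 'a"
  rels :: "'r \<Rightarrow> 'a list set"

definition is_struc :: "('f \<Rightarrow> nat) \<Rightarrow> ('r \<Rightarrow> nat) \<Rightarrow> ('a, 'f, 'r) struc \<Rightarrow> bool" where
  "is_struc arF arR A \<longleftrightarrow> univ A \<noteq> {}
     \<and> (\<forall>f xs. length xs = arF f \<and> set xs \<subseteq> univ A \<longrightarrow> funs A f xs \<in> univ A)
     \<and> (\<forall>r. rels A r \<subseteq> {xs. length xs = arR r \<and> set xs \<subseteq> univ A})"

fun eval :: "('a, 'f, 'r) struc \<Rightarrow> (nat \<Rightarrow> 'a) \<Rightarrow> 'f trm \<Rightarrow> 'a" where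
  "eval A e (Var n) = e n"
| "eval A e (Fn f ts) = funs A f (map (eval A e) ts)"

primrec sat :: "('a, 'f, 'r) struc \<Rightarrow> (nat \<Rightarrow> 'a) \<Rightarrow> ('f, 'r) fm \<Rightarrow> bool" where
  "sat A e (Eq t u) = (eval A e t = eval A e u)"
| "sat A e (Rel r ts) = (map (eval A e) ts \<in> rels A r)"
| "sat A e (Neg \<phi>) = (\<not> sat A e \<phi>)"
| "sat A e (Conj \<phi> \<psi>) = (sat A e \<phi> \<and> sat A e \<psi>)"
| "sat A e (Ex x \<phi>) = (\<exists>a\<in>univ A. sat A (e(x := a)) \<phi>)"

definition kind :: "('k \<Rightarrow> nat) \<Rightarrow> ('a, 'f, 'r) struc \<Rightarrow> ('k \<Rightarrow> 'a list set) \<Rightarrow> bool" where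
  "kind s A R \<longleftrightarrow> (\<forall>k. R k \<subseteq> {xs. length xs = s k \<and> set xs \<subseteq> univ A})"

definition expand :: "('a, 'f, 'r) struc \<Rightarrow> ('k \<Rightarrow> 'a list set) \<Rightarrow> ('a, 'f, 'r + 'k) struc" where
  "expand A R = \<lparr>univ = univ A, funs = funs A, rels = case_sum (rels A) R\<rparr>"

definition ext_ar :: "('r \<Rightarrow> nat) \<Rightarrow> ('k \<Rightarrow> nat) \<Rightarrow> 'r + 'k \<Rightarrow> nat" where
  "ext_ar arR s = case_sum arR s"

text \<open>F: first-order sentences of signature tau plus X_k (k<kappa), X_k of arity s k.\<close>
definition Fsent :: "('f \<Rightarrow> nat) \<Rightarrow> ('r \<Rightarrow> nat) \<Rightarrow> ('k \<Rightarrow> nat) \<Rightarrow> ('f, 'r + 'k) fm set" where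
  "Fsent arF arR s = {\<phi>. wf_fm arF (ext_ar arR s) \<phi> \<and> fv \<phi> = {}}"

definition tp :: "('f \<Rightarrow> nat) \<Rightarrow> ('r \<Rightarrow> nat) \<Rightarrow> ('k \<Rightarrow> nat) \<Rightarrow> ('a, 'f, 'r) struc
     \<Rightarrow> ('k \<Rightarrow> 'a list set) \<Rightarrow> ('f, 'r + 'k) fm set" where
  "tp arF arR s A R = {\<phi> \<in> Fsent arF arR s. sat (expand A R) (\<lambda>_. SOME a. a \<in> univ A) \<phi>}"

section \<open>The space 2^lambda = 2^F (product of discrete two-point spaces)\<close>

definition cantorF :: "('f \<Rightarrow> nat) \<Rightarrow> ('r \<Rightarrow> nat) \<Rightarrow> ('k \<Rightarrow> nat) \<Rightarrow> (('f, 'r + 'k) fm \<Rightarrow> bool) topology" where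
  "cantorF arF arR s = product_topology (\<lambda>_. discrete_topology (UNIV :: bool set)) (Fsent arF arR s)"

text \<open>Identification of a subset of F with its characteristic function on F.\<close>
definition charF :: "('f \<Rightarrow> nat) \<Rightarrow> ('r \<Rightarrow> nat) \<Rightarrow> ('k \<Rightarrow> nat) \<Rightarrow> ('f, 'r + 'k) fm set \<Rightarrow> (('f, 'r + 'k) fm \<Rightarrow> bool)" where
  "charF arF arR s p = restrict (\<lambda>\<phi>. \<phi> \<in> p) (Fsent arF arR s)"

definition ultrafilter_on :: "'j set \<Rightarrow> 'j set set \<Rightarrow> bool" where
  "ultrafilter_on J U \<longleftrightarrow> U \<subseteq> Pow J \<and> J \<in> U \<and> {} \<notin> U
     \<and> (\<forall>X Y. X \<in> U \<and> Y \<in> U \<longrightarrow> X \<inter> Y \<in> U)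
     \<and> (\<forall>X Y. X \<in> U \<and> X \<subseteq> Y \<and> Y \<subseteq> J \<longrightarrow> Y \<in> U)
     \<and> (\<forall>X. X \<subseteq> J \<longrightarrow> X \<in> U \<or> J - X \<in> U)"

definition up_cls :: "'j set \<Rightarrow> 'j set set \<Rightarrow> ('j \<Rightarrow> ('a, 'f, 'r) struc) \<Rightarrow> ('j \<Rightarrow> 'a) \<Rightarrow> ('j \<Rightarrow> 'a) set" where
  "up_cls J U A f = {g \<in> PiE J (\<lambda>j. univ (A j)). {j \<in> J. f j = g j} \<in> U}"

definition up_dom :: "'j set \<Rightarrow> 'j set set \<Rightarrow> ('j \<Rightarrow> ('a, 'f, 'r) struc) \<Rightarrow> ('j \<Rightarrow> 'a) set set" where
  "up_dom J U A = up_cls J U A ` PiE J (\<lambda>j. univ (A j))"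

definition rep :: "('j \<Rightarrow> 'a) set \<Rightarrow> 'j \<Rightarrow> 'a" where
  "rep c = (SOME f. f \<in> c)"

definition up_rel :: "'j set \<Rightarrow> 'j set set \<Rightarrow> ('j \<Rightarrow> ('a, 'f, 'r) struc) \<Rightarrow> ('j \<Rightarrow> 'a list set) \<Rightarrow> ('j \<Rightarrow> 'a) set list set" where
  "up_rel J U A Rj = {cs. set cs \<subseteq> up_dom J U A \<and> {j \<in> J. map (\<lambda>c. rep c j) cs \<in> Rj j} \<in> U}"

definition uprod :: "'j set \<Rightarrow> 'j set set \<Rightarrow> ('j \<Rightarrow> ('a, 'f, 'r) struc) \<Rightarrow> (('j \<Rightarrow> 'a) set, 'f, 'r) struc" where
  "uprod J U A = \<lparr>univ = up_dom J U A,
     funs = (\<lambda>f cs. up_cls J U A (\<lambda>j\<in>J. funs (A j) f (map (\<lambda>c. rep c j) cs))),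
     rels = (\<lambda>r. up_rel J U A (\<lambda>j. rels (A j) r))\<rparr>"

end

(*
  By Los's theorem the type of an ultraproduct is the ultralimit of the types of its factors:
  a sentence belongs to it iff the set of factors whose type contains it lies in the ultrafilter.
  A basic open set of 2^F prescribes membership for finitely many sentences; the set of indices
  whose type agrees with the ultralimit on all of them is a finite intersection of members of
  the ultrafilter, hence nonempty, so every such ultralimit lies in the closure of U.
  Conversely, if p lies in the closure of U, the sets of indices i whose type agrees with p on
  a single sentence have the finite intersection property; any ultrafilter G on I containing
  them has ultralimit p, so the ultraproduct of the A i with their own relations modulo G has
  type p.
*)

theory Submission
  imports Defs
begin

section \<open>Ultrafilters\<close>

lemma ultrafilter_onD:
  assumes "ultrafilter_on J U"
  shows "J \<in> U" "{} \<notin> U" "X \<in> U \<Longrightarrow> Y \<in> U \<Longrightarrow> X \<inter> Y \<in> U"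
    "X \<in> U \<Longrightarrow> X \<subseteq> Y \<Longrightarrow> Y \<subseteq> J \<Longrightarrow> Y \<in> U" "X \<subseteq> J \<Longrightarrow> X \<in> U \<or> J - X \<in> U"
  using assms unfolding ultrafilter_on_def by blast+

lemma ultrafilter_on_mono:
  assumes "ultrafilter_on J U" "{j\<in>J. P j} \<in> U" "\<And>j. j \<in> J \<Longrightarrow> P j \<Longrightarrow> Q j"
  shows "{j\<in>J. Q j} \<in> U"
  by (rule ultrafilter_onD(4)[OF assms(1,2)]) (use assms(3) in auto)

lemma ultrafilter_on_conj_iff:
  assumes "ultrafilter_on J U"
  shows "{j\<in>J. P j \<and> Q j} \<in> U \<longleftrightarrow> {j\<in>J. P j} \<in> U \<and> {j\<in>J. Q j} \<in> U"
proof
  assume "{j\<in>J. P j} \<in> U \<and> {j\<in>J. Q j} \<in> U"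
  then have "{j\<in>J. P j} \<inter> {j\<in>J. Q j} \<in> U" using ultrafilter_onD(3)[OF assms] by blast
  moreover have "{j\<in>J. P j} \<inter> {j\<in>J. Q j} = {j\<in>J. P j \<and> Q j}" by blast
  ultimately show "{j\<in>J. P j \<and> Q j} \<in> U" by simp
next
  assume "{j\<in>J. P j \<and> Q j} \<in> U"
  then show "{j\<in>J. P j} \<in> U \<and> {j\<in>J. Q j} \<in> U"
    using ultrafilter_on_mono[OF assms, of "\<lambda>j. P j \<and> Q j"] by blast
qed

lemma ultrafilter_on_not_iff:
  assumes "ultrafilter_on J U"
  shows "{j\<in>J. \<not> P j} \<in> U \<longleftrightarrow> {j\<in>J. P j} \<notin> U"
proof -
  have "{j\<in>J. P j \<and> \<not> P j} \<notin> U" using ultrafilter_onD(2)[OF assms] by simp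
  moreover have "{j\<in>J. P j} \<in> U \<or> J - {j\<in>J. P j} \<in> U" by (rule ultrafilter_onD(5)[OF assms]) blast
  moreover have "J - {j\<in>J. P j} = {j\<in>J. \<not> P j}" by blast
  ultimately show ?thesis using ultrafilter_on_conj_iff[OF assms, of P "\<lambda>j. \<not> P j"] by auto
qed

lemma ultrafilter_on_cong:
  assumes "ultrafilter_on J U" "{j\<in>J. P j \<longleftrightarrow> Q j} \<in> U"
  shows "{j\<in>J. P j} \<in> U \<longleftrightarrow> {j\<in>J. Q j} \<in> U"
proof -
  have "{j\<in>J. P j} \<in> U \<longleftrightarrow> {j\<in>J. P j \<and> (P j \<longleftrightarrow> Q j)} \<in> U"
    by (simp add: ultrafilter_on_conj_iff[OF assms(1)] assms(2))
  also have "{j\<in>J. P j \<and> (P j \<longleftrightarrow> Q j)} = {j\<in>J. Q j \<and> (P j \<longleftrightarrow> Q j)}"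
    by blast
  also have "\<dots> \<in> U \<longleftrightarrow> {j\<in>J. Q j} \<in> U"
    by (simp add: ultrafilter_on_conj_iff[OF assms(1)] assms(2))
  finally show ?thesis .
qed

lemma ultrafilter_on_Ball:
  assumes "ultrafilter_on J U" "finite F" "\<forall>x\<in>F. {j\<in>J. P x j} \<in> U"
  shows "{j\<in>J. \<forall>x\<in>F. P x j} \<in> U"
  using assms(2,3)
proof (induction F rule: finite_induct)
  case empty
  then show ?case using ultrafilter_onD(1)[OF assms(1)] by simp
next
  case (insert x F)
  then show ?case by (simp add: ultrafilter_on_conj_iff[OF assms(1)])
qed

definition fip_on :: "'i set \<Rightarrow> 'i set set \<Rightarrow> bool" where
  "fip_on I M \<longleftrightarrow> (\<forall>F. finite F \<and> F \<subseteq> M \<longrightarrow> I \<inter> \<Inter>F \<noteq> {})"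

lemma fip_on_insert_iff:
  "fip_on I (insert X N) \<longleftrightarrow> (\<forall>F. finite F \<and> F \<subseteq> N \<longrightarrow> I \<inter> \<Inter>F \<inter> X \<noteq> {})"
  unfolding fip_on_def
proof (intro iffI allI impI)
  fix F assume fip: "\<forall>F. finite F \<and> F \<subseteq> insert X N \<longrightarrow> I \<inter> \<Inter>F \<noteq> {}"
    and F: "finite F \<and> F \<subseteq> N"
  then have "I \<inter> \<Inter>(insert X F) \<noteq> {}" by blast
  then show "I \<inter> \<Inter>F \<inter> X \<noteq> {}" by auto
next
  fix F assume meets: "\<forall>F. finite F \<and> F \<subseteq> N \<longrightarrow> I \<inter> \<Inter>F \<inter> X \<noteq> {}"
    and F: "finite F \<and> F \<subseteq> insert X N"
  then have "I \<inter> \<Inter>(F - {X}) \<inter> X \<noteq> {}" by blast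
  then show "I \<inter> \<Inter>F \<noteq> {}" by auto
qed

lemma fip_on_insert_compl:
  assumes "fip_on I N"
  shows "fip_on I (insert X N) \<or> fip_on I (insert (I - X) N)"
proof (rule ccontr)
  assume "\<not> (fip_on I (insert X N) \<or> fip_on I (insert (I - X) N))"
  then obtain F1 F2 where F1: "finite F1" "F1 \<subseteq> N" "I \<inter> \<Inter>F1 \<inter> X = {}"
    and F2: "finite F2" "F2 \<subseteq> N" "I \<inter> \<Inter>F2 \<inter> (I - X) = {}"
    unfolding fip_on_insert_iff by blast
  have "I \<inter> \<Inter>(F1 \<union> F2) \<noteq> {}" using assms F1 F2 unfolding fip_on_def by blast
  moreover have "I \<inter> \<Inter>(F1 \<union> F2) = {}" using F1(3) F2(3) by blast
  ultimately show False by simp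
qed

lemma fip_on_Union_chain:
  assumes "C \<noteq> {}" "subset.chain \<FF> C" "\<forall>N\<in>C. fip_on I N"
  shows "fip_on I (\<Union>C)"
  unfolding fip_on_def
proof (intro allI impI)
  fix F assume F: "finite F \<and> F \<subseteq> \<Union>C"
  then obtain N where "N \<in> C" "F \<subseteq> N"
    using assms(1,2) finite_subset_Union_chain by metis
  with F assms(3) show "I \<inter> \<Inter>F \<noteq> {}" unfolding fip_on_def by blast
qed

lemma ultrafilter_on_if_maximal_fip_on:
  assumes "N \<subseteq> Pow I" "fip_on I N"
    and maximal: "\<And>X. X \<subseteq> I \<Longrightarrow> fip_on I (insert X N) \<Longrightarrow> X \<in> N"
  shows "ultrafilter_on I N"
proof -
  have fip: "I \<inter> \<Inter>F \<noteq> {}" if "finite F" "F \<subseteq> N" for F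
    using assms(2) that unfolding fip_on_def by simp
  show ?thesis
    unfolding ultrafilter_on_def
  proof (intro conjI allI impI)
    show "N \<subseteq> Pow I" by (fact assms(1))
    show "I \<in> N"
      using fip by (intro maximal) (auto simp: fip_on_insert_iff Int_absorb2)
    show "{} \<notin> N" using fip[of "{{}}"] by auto
  next
    fix X Y assume XY: "X \<in> N \<and> Y \<in> N"
    have "I \<inter> \<Inter>F \<inter> (X \<inter> Y) \<noteq> {}" if "finite F" "F \<subseteq> N" for F
      using fip[of "insert X (insert Y F)"] that XY by (simp add: Int_ac)
    then show "X \<inter> Y \<in> N"
      using XY assms(1) by (intro maximal) (auto simp: fip_on_insert_iff)
  next
    fix X Y assume XY: "X \<in> N \<and> X \<subseteq> Y \<and> Y \<subseteq> I"
    have "I \<inter> \<Inter>F \<inter> Y \<noteq> {}" if "finite F" "F \<subseteq> N" for F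
      using fip[of "insert X F"] that XY by auto
    then show "Y \<in> N"
      using XY by (intro maximal) (auto simp: fip_on_insert_iff)
  next
    fix X assume "X \<subseteq> I"
    then show "X \<in> N \<or> I - X \<in> N"
      using fip_on_insert_compl[OF assms(2), of X] maximal[of X] maximal[of "I - X"] by blast
  qed
qed

lemma ultrafilter_on_extend:
  assumes "M \<subseteq> Pow I" "fip_on I M"
  shows "\<exists>G. ultrafilter_on I G \<and> M \<subseteq> G"
proof -
  define \<FF> where "\<FF> = {N. M \<subseteq> N \<and> N \<subseteq> Pow I \<and> fip_on I N}"
  have "\<exists>N\<in>\<FF>. \<forall>N'\<in>\<FF>. N \<subseteq> N' \<longrightarrow> N' = N"
  proof (rule subset_Zorn_nonempty)
    show "\<FF> \<noteq> {}" using assms unfolding \<FF>_def by blast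
  next
    fix C assume C: "C \<noteq> {}" "subset.chain \<FF> C"
    then have "C \<subseteq> \<FF>" by (simp add: subset.chain_def)
    then have "\<Union>C \<subseteq> Pow I" "\<forall>N\<in>C. fip_on I N"
      unfolding \<FF>_def by auto
    moreover obtain N0 where "N0 \<in> C" using C(1) by blast
    with \<open>C \<subseteq> \<FF>\<close> have "M \<subseteq> \<Union>C" unfolding \<FF>_def by blast
    ultimately show "\<Union>C \<in> \<FF>" using fip_on_Union_chain[OF C] unfolding \<FF>_def by simp
  qed
  then obtain N where N: "M \<subseteq> N" "N \<subseteq> Pow I" "fip_on I N"
    and maximal: "\<And>N'. N' \<in> \<FF> \<Longrightarrow> N \<subseteq> N' \<Longrightarrow> N' = N"
    unfolding \<FF>_def by auto
  have "X \<in> N" if "X \<subseteq> I" "fip_on I (insert X N)" for X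
    using maximal[of "insert X N"] N that unfolding \<FF>_def by auto
  with N have "ultrafilter_on I N" by (intro ultrafilter_on_if_maximal_fip_on)
  with N(1) show ?thesis by auto
qed

section \<open>Ultralimits\<close>

definition ulim :: "'j set \<Rightarrow> 'j set set \<Rightarrow> ('j \<Rightarrow> 'x set) \<Rightarrow> 'x set" where
  "ulim J U T = {x. {j\<in>J. x \<in> T j} \<in> U}"

lemma ulim_agrees_on_finite:
  assumes "ultrafilter_on J U" "finite F"
  shows "\<exists>j\<in>J. F \<inter> T j = F \<inter> ulim J U T"
proof -
  have "\<forall>x\<in>F. {j\<in>J. x \<in> T j \<longleftrightarrow> x \<in> ulim J U T} \<in> U"
  proof
    fix x
    show "{j\<in>J. x \<in> T j \<longleftrightarrow> x \<in> ulim J U T} \<in> U"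
    proof (cases "x \<in> ulim J U T")
      case True
      then show ?thesis by (simp add: ulim_def)
    next
      case False
      then show ?thesis by (simp add: ulim_def ultrafilter_on_not_iff[OF assms(1)])
    qed
  qed
  then have "{j\<in>J. \<forall>x\<in>F. x \<in> T j \<longleftrightarrow> x \<in> ulim J U T} \<in> U"
    by (rule ultrafilter_on_Ball[OF assms])
  then have "{j\<in>J. \<forall>x\<in>F. x \<in> T j \<longleftrightarrow> x \<in> ulim J U T} \<noteq> {}"
    using ultrafilter_onD(2)[OF assms(1)] by force
  then obtain j where "j \<in> J" "\<forall>x\<in>F. x \<in> T j \<longleftrightarrow> x \<in> ulim J U T" by blast
  then have "F \<inter> T j = F \<inter> ulim J U T" by blast
  with \<open>j \<in> J\<close> show ?thesis by blast
qed

lemma ex_ultrafilter_ulim_eq: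
  assumes "p \<subseteq> S" "\<forall>i\<in>I. T i \<subseteq> S"
    and approx: "\<forall>F. finite F \<and> F \<subseteq> S \<longrightarrow> (\<exists>i\<in>I. F \<inter> T i = F \<inter> p)"
  shows "\<exists>G. ultrafilter_on I G \<and> ulim I G T = p"
proof -
  define X where "X x = {i\<in>I. x \<in> T i \<longleftrightarrow> x \<in> p}" for x
  have "fip_on I (X ` S)"
    unfolding fip_on_def
  proof (intro allI impI)
    fix F assume "finite F \<and> F \<subseteq> X ` S"
    then obtain F0 where F0: "finite F0" "F0 \<subseteq> S" "F = X ` F0"
      by (meson finite_subset_image)
    then obtain i where "i \<in> I" "F0 \<inter> T i = F0 \<inter> p" using approx by blast
    then have "i \<in> I \<inter> \<Inter>F" using F0(3) by (auto simp: X_def)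
    then show "I \<inter> \<Inter>F \<noteq> {}" by blast
  qed
  moreover have "X ` S \<subseteq> Pow I" by (auto simp: X_def)
  ultimately obtain G where G: "ultrafilter_on I G" "X ` S \<subseteq> G"
    using ultrafilter_on_extend by blast
  have "x \<in> ulim I G T \<longleftrightarrow> x \<in> p" for x
  proof (cases "x \<in> S")
    case True
    then have "{i\<in>I. x \<in> T i \<longleftrightarrow> x \<in> p} \<in> G" using G(2) by (auto simp: X_def)
    then show ?thesis
      by (cases "x \<in> p") (simp_all add: ulim_def ultrafilter_on_not_iff[OF G(1), symmetric])
  next
    case False
    then have none: "{i\<in>I. x \<in> T i} = {}" using assms(2) by blast
    have "x \<notin> ulim I G T" by (simp add: ulim_def none ultrafilter_onD(2)[OF G(1)])
    then show ?thesis using False assms(1) by blast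
  qed
  with G(1) show ?thesis by blast
qed

section \<open>Los's theorem\<close>

lemma up_cls_eq:
  assumes "ultrafilter_on J U" "{j\<in>J. f j = g j} \<in> U"
  shows "up_cls J U B f = up_cls J U B g"
proof -
  have "{j\<in>J. f j = h j} \<in> U \<longleftrightarrow> {j\<in>J. g j = h j} \<in> U" for h
    by (rule ultrafilter_on_cong[OF assms(1)], rule ultrafilter_on_mono[OF assms]) auto
  then show ?thesis unfolding up_cls_def by auto
qed

lemma self_in_up_cls:
  "ultrafilter_on J U \<Longrightarrow> f \<in> PiE J (\<lambda>j. univ (B j)) \<Longrightarrow> f \<in> up_cls J U B f"
  unfolding up_cls_def using ultrafilter_onD(1) by fastforce

lemma up_cls_eq_iff:
  assumes "ultrafilter_on J U" "g \<in> PiE J (\<lambda>j. univ (B j))"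
  shows "up_cls J U B f = up_cls J U B g \<longleftrightarrow> {j\<in>J. f j = g j} \<in> U"
proof
  assume "up_cls J U B f = up_cls J U B g"
  then have "g \<in> up_cls J U B f" using self_in_up_cls[OF assms] by simp
  then show "{j\<in>J. f j = g j} \<in> U" unfolding up_cls_def by simp
qed (rule up_cls_eq[OF assms(1)])

lemma rep_up_cls:
  assumes "ultrafilter_on J U" "f \<in> PiE J (\<lambda>j. univ (B j))"
  shows "{j\<in>J. rep (up_cls J U B f) j = f j} \<in> U"
proof -
  have "rep (up_cls J U B f) \<in> up_cls J U B f"
    unfolding rep_def by (rule someI[where P = "\<lambda>g. g \<in> up_cls J U B f", OF self_in_up_cls[OF assms]])
  then have "{j\<in>J. f j = rep (up_cls J U B f) j} \<in> U" unfolding up_cls_def by simp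
  then show ?thesis by (rule ultrafilter_on_mono[OF assms(1)]) auto
qed

lemma rep_up_cls_list:
  assumes "ultrafilter_on J U" "set fs \<subseteq> PiE J (\<lambda>j. univ (B j))"
  shows "{j\<in>J. map (\<lambda>f. rep (up_cls J U B f) j) fs = map (\<lambda>f. f j) fs} \<in> U"
proof -
  have "{j\<in>J. \<forall>f\<in>set fs. rep (up_cls J U B f) j = f j} \<in> U"
    using assms(2) by (intro ultrafilter_on_Ball[OF assms(1) finite_set] ballI rep_up_cls[OF assms(1)]) auto
  then show ?thesis by (rule ultrafilter_on_mono[OF assms(1)]) simp
qed

lemma up_rel_map_up_cls_iff:
  assumes "ultrafilter_on J U" "set fs \<subseteq> PiE J (\<lambda>j. univ (B j))"
  shows "map (up_cls J U B) fs \<in> up_rel J U B Rj \<longleftrightarrow> {j\<in>J. map (\<lambda>f. f j) fs \<in> Rj j} \<in> U"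
proof -
  have "set (map (up_cls J U B) fs) \<subseteq> up_dom J U B" using assms(2) unfolding up_dom_def by auto
  then have "map (up_cls J U B) fs \<in> up_rel J U B Rj
      \<longleftrightarrow> {j\<in>J. map (\<lambda>f. rep (up_cls J U B f) j) fs \<in> Rj j} \<in> U"
    by (simp add: up_rel_def o_def)
  also have "\<dots> \<longleftrightarrow> {j\<in>J. map (\<lambda>f. f j) fs \<in> Rj j} \<in> U"
    by (rule ultrafilter_on_cong[OF assms(1)], rule ultrafilter_on_mono[OF assms(1) rep_up_cls_list[OF assms]])
      (simp cong: map_cong)
  finally show ?thesis .
qed

lemma funs_uprod_map_up_cls:
  assumes "ultrafilter_on J U" "set fs \<subseteq> PiE J (\<lambda>j. univ (B j))"
  shows "funs (uprod J U B) f (map (up_cls J U B) fs)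
    = up_cls J U B (\<lambda>j\<in>J. funs (B j) f (map (\<lambda>g. g j) fs))"
proof -
  have "funs (uprod J U B) f (map (up_cls J U B) fs)
      = up_cls J U B (\<lambda>j\<in>J. funs (B j) f (map (\<lambda>g. rep (up_cls J U B g) j) fs))"
    by (simp add: uprod_def o_def)
  also have "\<dots> = up_cls J U B (\<lambda>j\<in>J. funs (B j) f (map (\<lambda>g. g j) fs))"
    by (rule up_cls_eq[OF assms(1)], rule ultrafilter_on_mono[OF assms(1) rep_up_cls_list[OF assms]])
      (simp cong: map_cong)
  finally show ?thesis .
qed

lemma eval_in_univ:
  assumes "is_struc arF arR B" "\<forall>n. e n \<in> univ B" "wf_trm arF t"
  shows "eval B e t \<in> univ B"
  using assms(3)
proof (induction t)
  case (Fn f ts)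
  then have "set (map (eval B e) ts) \<subseteq> univ B" by auto
  then show ?case using Fn.prems assms(1) unfolding is_struc_def by simp
qed (use assms(2) in simp)

lemma eval_restrict_in_PiE:
  assumes "\<forall>j\<in>J. is_struc arF arR (B j)" "\<forall>n. h n \<in> PiE J (\<lambda>j. univ (B j))" "wf_trm arF t"
  shows "(\<lambda>j\<in>J. eval (B j) (\<lambda>n. h n j) t) \<in> PiE J (\<lambda>j. univ (B j))"
  using assms eval_in_univ[of arF arR "B j" "\<lambda>n. h n j" t for j] by (auto simp: PiE_iff)

(* Assignments into the ultraproduct are written as classes of pointwise assignments h,
   so that no representatives have to be chosen. *)
lemma eval_uprod:
  assumes "ultrafilter_on J U" "\<forall>j\<in>J. is_struc arF arR (B j)"
    and "\<forall>n. h n \<in> PiE J (\<lambda>j. univ (B j))" "wf_trm arF t"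
  shows "eval (uprod J U B) (\<lambda>n. up_cls J U B (h n)) t
    = up_cls J U B (\<lambda>j\<in>J. eval (B j) (\<lambda>n. h n j) t)"
  using assms(4)
proof (induction t)
  case (Var n)
  have "(\<lambda>j\<in>J. h n j) = h n" by (simp add: PiE_restrict[OF assms(3)[rule_format]])
  then show ?case by simp
next
  case (Fn f ts)
  define g where "g t = (\<lambda>j\<in>J. eval (B j) (\<lambda>n. h n j) t)" for t
  have "g t \<in> PiE J (\<lambda>j. univ (B j))" if "t \<in> set ts" for t
    unfolding g_def using Fn.prems that by (intro eval_restrict_in_PiE[OF assms(2,3)]) simp
  then have PiE: "set (map g ts) \<subseteq> PiE J (\<lambda>j. univ (B j))" by auto
  have "map (eval (uprod J U B) (\<lambda>n. up_cls J U B (h n))) ts = map (up_cls J U B) (map g ts)"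
    using Fn by (simp add: g_def restrict_def)
  then have "eval (uprod J U B) (\<lambda>n. up_cls J U B (h n)) (Fn f ts)
      = funs (uprod J U B) f (map (up_cls J U B) (map g ts))"
    by (simp only: eval.simps)
  also have "\<dots> = up_cls J U B (\<lambda>j\<in>J. funs (B j) f (map (\<lambda>g. g j) (map g ts)))"
    by (rule funs_uprod_map_up_cls[OF assms(1) PiE])
  also have "\<dots> = up_cls J U B (\<lambda>j\<in>J. eval (B j) (\<lambda>n. h n j) (Fn f ts))"
    by (intro arg_cong[where f = "up_cls J U B"] restrict_ext) (simp add: g_def o_def)
  finally show ?case .
qed

lemma sat_uprod_Eq_iff:
  assumes uf: "ultrafilter_on J U" and structs: "\<forall>j\<in>J. is_struc arF arR (B j)"
    and h: "\<forall>n. h n \<in> PiE J (\<lambda>j. univ (B j))" and "wf_trm arF t" "wf_trm arF u"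
  shows "sat (uprod J U B) (\<lambda>n. up_cls J U B (h n)) (Eq t u)
    \<longleftrightarrow> {j\<in>J. sat (B j) (\<lambda>n. h n j) (Eq t u)} \<in> U"
proof -
  let ?g = "\<lambda>t. \<lambda>j\<in>J. eval (B j) (\<lambda>n. h n j) t"
  have "sat (uprod J U B) (\<lambda>n. up_cls J U B (h n)) (Eq t u)
      \<longleftrightarrow> up_cls J U B (?g t) = up_cls J U B (?g u)"
    using assms(4,5) by (simp add: eval_uprod[OF uf structs h])
  also have "\<dots> \<longleftrightarrow> {j\<in>J. ?g t j = ?g u j} \<in> U"
    by (rule up_cls_eq_iff[OF uf eval_restrict_in_PiE[OF structs h assms(5)]])
  also have "{j\<in>J. ?g t j = ?g u j} = {j\<in>J. sat (B j) (\<lambda>n. h n j) (Eq t u)}"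
    by auto
  finally show ?thesis .
qed

lemma sat_uprod_Rel_iff:
  assumes uf: "ultrafilter_on J U" and structs: "\<forall>j\<in>J. is_struc arF arR (B j)"
    and h: "\<forall>n. h n \<in> PiE J (\<lambda>j. univ (B j))" and ts: "\<forall>t\<in>set ts. wf_trm arF t"
  shows "sat (uprod J U B) (\<lambda>n. up_cls J U B (h n)) (Rel r ts)
    \<longleftrightarrow> {j\<in>J. sat (B j) (\<lambda>n. h n j) (Rel r ts)} \<in> U"
proof -
  define g where "g t = (\<lambda>j\<in>J. eval (B j) (\<lambda>n. h n j) t)" for t
  have "g t \<in> PiE J (\<lambda>j. univ (B j))" if "t \<in> set ts" for t
    unfolding g_def using ts that by (intro eval_restrict_in_PiE[OF structs h]) simp
  then have PiE: "set (map g ts) \<subseteq> PiE J (\<lambda>j. univ (B j))" by auto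
  have rels: "rels (uprod J U B) r = up_rel J U B (\<lambda>j. rels (B j) r)"
    by (simp add: uprod_def)
  have "map (eval (uprod J U B) (\<lambda>n. up_cls J U B (h n))) ts = map (up_cls J U B) (map g ts)"
    using ts by (simp add: eval_uprod[OF uf structs h] g_def)
  then have "sat (uprod J U B) (\<lambda>n. up_cls J U B (h n)) (Rel r ts)
      \<longleftrightarrow> map (up_cls J U B) (map g ts) \<in> up_rel J U B (\<lambda>j. rels (B j) r)"
    by (simp only: sat.simps rels)
  also have "\<dots> \<longleftrightarrow> {j\<in>J. map (\<lambda>g. g j) (map g ts) \<in> rels (B j) r} \<in> U"
    by (rule up_rel_map_up_cls_iff[OF uf PiE])
  also have "{j\<in>J. map (\<lambda>g. g j) (map g ts) \<in> rels (B j) r}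
      = {j\<in>J. sat (B j) (\<lambda>n. h n j) (Rel r ts)}"
    by (auto simp: o_def g_def)
  finally show ?thesis .
qed

lemma ex_PiE_witness:
  assumes "\<forall>j\<in>J. d j \<in> D j"
  shows "\<exists>g\<in>PiE J D. \<forall>j\<in>J. (\<exists>a\<in>D j. P j a) \<longrightarrow> P j (g j)"
proof -
  have "\<forall>j\<in>J. \<exists>a. a \<in> D j \<and> ((\<exists>b\<in>D j. P j b) \<longrightarrow> P j a)"
    using assms by blast
  then obtain f where "\<forall>j\<in>J. f j \<in> D j \<and> ((\<exists>b\<in>D j. P j b) \<longrightarrow> P j (f j))"
    by (metis bchoice)
  then show ?thesis by (intro bexI[of _ "restrict f J"]) auto
qed

lemma sat_uprod_Ex_iff:
  assumes uf: "ultrafilter_on J U" and h: "\<forall>n. h n \<in> PiE J (\<lambda>j. univ (B j))"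
    and IH: "\<And>g. g \<in> PiE J (\<lambda>j. univ (B j)) \<Longrightarrow>
      sat (uprod J U B) (\<lambda>n. up_cls J U B ((h(x := g)) n)) \<phi>
        \<longleftrightarrow> {j\<in>J. sat (B j) ((\<lambda>n. h n j)(x := g j)) \<phi>} \<in> U"
  shows "sat (uprod J U B) (\<lambda>n. up_cls J U B (h n)) (Ex x \<phi>)
    \<longleftrightarrow> {j\<in>J. sat (B j) (\<lambda>n. h n j) (Ex x \<phi>)} \<in> U"
proof -
  have upd: "(\<lambda>n. up_cls J U B (h n))(x := up_cls J U B g) = (\<lambda>n. up_cls J U B ((h(x := g)) n))"
    for g by (rule ext) simp
  have univ: "univ (uprod J U B) = up_cls J U B ` PiE J (\<lambda>j. univ (B j))"
    by (simp add: uprod_def up_dom_def)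
  show ?thesis
  proof
    assume "sat (uprod J U B) (\<lambda>n. up_cls J U B (h n)) (Ex x \<phi>)"
    then obtain c where "c \<in> univ (uprod J U B)"
      and c: "sat (uprod J U B) ((\<lambda>n. up_cls J U B (h n))(x := c)) \<phi>"
      by auto
    then obtain g where g: "g \<in> PiE J (\<lambda>j. univ (B j))" and "c = up_cls J U B g"
      unfolding univ by blast
    with c have "sat (uprod J U B) (\<lambda>n. up_cls J U B ((h(x := g)) n)) \<phi>"
      by (simp only: upd)
    then have "{j\<in>J. sat (B j) ((\<lambda>n. h n j)(x := g j)) \<phi>} \<in> U" using IH[OF g] by blast
    then show "{j\<in>J. sat (B j) (\<lambda>n. h n j) (Ex x \<phi>)} \<in> U"
      by (rule ultrafilter_on_mono[OF uf]) (use g in \<open>auto simp: PiE_iff\<close>)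
  next
    assume ae: "{j\<in>J. sat (B j) (\<lambda>n. h n j) (Ex x \<phi>)} \<in> U"
    obtain g where g: "g \<in> PiE J (\<lambda>j. univ (B j))"
      and witness: "\<forall>j\<in>J. sat (B j) (\<lambda>n. h n j) (Ex x \<phi>) \<longrightarrow> sat (B j) ((\<lambda>n. h n j)(x := g j)) \<phi>"
      using ex_PiE_witness[of J "\<lambda>j. h x j" "\<lambda>j. univ (B j)"
          "\<lambda>j a. sat (B j) ((\<lambda>n. h n j)(x := a)) \<phi>"] h
      by (auto simp: PiE_iff)
    have "{j\<in>J. sat (B j) ((\<lambda>n. h n j)(x := g j)) \<phi>} \<in> U"
      using ae by (rule ultrafilter_on_mono[OF uf]) (use witness in blast)
    then have "sat (uprod J U B) ((\<lambda>n. up_cls J U B (h n))(x := up_cls J U B g)) \<phi>"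
      using IH[OF g] by (simp only: upd)
    moreover have "up_cls J U B g \<in> univ (uprod J U B)" using g univ by simp
    ultimately show "sat (uprod J U B) (\<lambda>n. up_cls J U B (h n)) (Ex x \<phi>)"
      unfolding sat.simps by blast
  qed
qed

lemma sat_uprod_iff:
  assumes uf: "ultrafilter_on J U" and structs: "\<forall>j\<in>J. is_struc arF arR (B j)"
  shows "wf_fm arF arR \<phi> \<Longrightarrow> \<forall>n. h n \<in> PiE J (\<lambda>j. univ (B j)) \<Longrightarrow>
    sat (uprod J U B) (\<lambda>n. up_cls J U B (h n)) \<phi> \<longleftrightarrow> {j\<in>J. sat (B j) (\<lambda>n. h n j) \<phi>} \<in> U"
proof (induction \<phi> arbitrary: h)
  case (Eq t u)
  then show ?case by (intro sat_uprod_Eq_iff[OF uf structs]) simp_all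
next
  case (Rel r ts)
  then show ?case by (intro sat_uprod_Rel_iff[OF uf structs]) simp_all
next
  case (Neg \<phi>)
  then show ?case by (simp add: ultrafilter_on_not_iff[OF uf])
next
  case (Conj \<phi> \<psi>)
  then show ?case by (simp add: ultrafilter_on_conj_iff[OF uf])
next
  case (Ex x \<phi>)
  have "(\<lambda>n. (h(x := g)) n j) = (\<lambda>n. h n j)(x := g j)" for g j by auto
  with Ex have "sat (uprod J U B) (\<lambda>n. up_cls J U B ((h(x := g)) n)) \<phi>
      \<longleftrightarrow> {j\<in>J. sat (B j) ((\<lambda>n. h n j)(x := g j)) \<phi>} \<in> U"
    if "g \<in> PiE J (\<lambda>j. univ (B j))" for g
    using that by simp
  then show ?case by (intro sat_uprod_Ex_iff[OF uf Ex.prems(2)])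
qed

section \<open>Types of ultraproducts\<close>

lemma eval_cong: "\<forall>n\<in>fv_trm t. e n = e' n \<Longrightarrow> eval B e t = eval B e' t"
  by (induction t) (auto cong: map_cong)

lemma sat_cong: "\<forall>n\<in>fv \<phi>. e n = e' n \<Longrightarrow> sat B e \<phi> = sat B e' \<phi>"
proof (induction \<phi> arbitrary: e e')
  case (Eq t u)
  then show ?case using eval_cong[of t e e' B] eval_cong[of u e e' B] by simp
next
  case (Rel r ts)
  then have "map (eval B e) ts = map (eval B e') ts"
    using eval_cong by (fastforce intro: map_cong)
  then show ?case by (simp only: sat.simps)
next
  case (Neg \<phi>)
  then show ?case by simp
next
  case (Conj \<phi> \<psi>)
  have "sat B e \<phi> = sat B e' \<phi>" "sat B e \<psi> = sat B e' \<psi>"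
    using Conj.prems by (intro Conj.IH; simp)+
  then show ?case by simp
next
  case (Ex x \<phi>)
  have "sat B (e(x := a)) \<phi> = sat B (e'(x := a)) \<phi>" for a
    using Ex.prems by (intro Ex.IH) auto
  then show ?case by simp
qed

lemma is_struc_expand:
  "is_struc arF arR A \<Longrightarrow> kind s A R \<Longrightarrow> is_struc arF (ext_ar arR s) (expand A R)"
  unfolding is_struc_def kind_def expand_def ext_ar_def by (auto split: sum.split)

lemma expand_uprod:
  "expand (uprod J U A) (\<lambda>k. up_rel J U A (\<lambda>j. R j k)) = uprod J U (\<lambda>j. expand (A j) (R j))"
proof -
  define A' where "A' j = expand (A j) (R j)" for j
  have A': "univ (A' j) = univ (A j)" "funs (A' j) = funs (A j)"
    "rels (A' j) = case_sum (rels (A j)) (R j)" for j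
    by (simp_all add: A'_def expand_def)
  have cls: "up_cls J U A' = up_cls J U A"
    by (rule ext) (simp add: up_cls_def A')
  then have dom: "up_dom J U A' = up_dom J U A"
    by (simp add: up_dom_def A')
  then have rel: "up_rel J U A' = up_rel J U A"
    by (intro ext) (simp add: up_rel_def)
  show ?thesis
    unfolding A'_def[symmetric]
    by (simp add: expand_def uprod_def cls dom rel A' fun_eq_iff split: sum.split)
qed

lemma tp_uprod:
  assumes uf: "ultrafilter_on L G"
    and structs: "\<forall>l\<in>L. is_struc arF arR (A l)" and kinds: "\<forall>l\<in>L. kind s (A l) (R l)"
  shows "tp arF arR s (uprod L G A) (\<lambda>k. up_rel L G A (\<lambda>l. R l k))
    = ulim L G (\<lambda>l. tp arF arR s (A l) (R l))"
proof (intro set_eqI)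
  fix \<phi>
  define B where "B = (\<lambda>l. expand (A l) (R l))"
  have structsB: "\<forall>l\<in>L. is_struc arF (ext_ar arR s) (B l)"
    using structs kinds by (simp add: B_def is_struc_expand)
  have "PiE L (\<lambda>l. univ (A l)) \<noteq> {}"
    using structs unfolding PiE_eq_empty_iff is_struc_def by auto
  then obtain h where h: "h \<in> PiE L (\<lambda>l. univ (A l))" by blast
  then have hB: "\<forall>n. (\<lambda>_. h) n \<in> PiE L (\<lambda>l. univ (B l))"
    by (simp add: B_def expand_def)
  show "\<phi> \<in> tp arF arR s (uprod L G A) (\<lambda>k. up_rel L G A (\<lambda>l. R l k))
    \<longleftrightarrow> \<phi> \<in> ulim L G (\<lambda>l. tp arF arR s (A l) (R l))"
  proof (cases "\<phi> \<in> Fsent arF arR s")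
    case True
    then have wf: "wf_fm arF (ext_ar arR s) \<phi>" and closed: "fv \<phi> = {}"
      by (simp_all add: Fsent_def)
    note sentence = sat_cong[where \<phi> = \<phi>, unfolded closed, simplified]
    have "\<phi> \<in> tp arF arR s (uprod L G A) (\<lambda>k. up_rel L G A (\<lambda>l. R l k))
        \<longleftrightarrow> sat (uprod L G B) (\<lambda>_. SOME a. a \<in> univ (uprod L G A)) \<phi>"
      using True by (simp add: tp_def expand_uprod B_def)
    also have "\<dots> \<longleftrightarrow> sat (uprod L G B) (\<lambda>_. up_cls L G B h) \<phi>"
      by (rule sentence)
    also have "\<dots> \<longleftrightarrow> {l\<in>L. sat (B l) (\<lambda>_. h l) \<phi>} \<in> G"
      by (rule sat_uprod_iff[OF uf structsB wf hB])
    also have "{l\<in>L. sat (B l) (\<lambda>_. h l) \<phi>} = {l\<in>L. \<phi> \<in> tp arF arR s (A l) (R l)}"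
      using True by (auto simp: tp_def B_def intro: sentence[THEN iffD1])
    finally show ?thesis by (simp add: ulim_def)
  next
    case False
    then show ?thesis
      using ultrafilter_onD(2)[OF uf] by (simp add: tp_def ulim_def)
  qed
qed

section \<open>The type space\<close>

lemma discrete_product_nhd_agree:
  fixes x :: "'i \<Rightarrow> 'b"
  assumes "x \<in> extensional S" "finite F" "F \<subseteq> S"
  shows "\<exists>W. openin (product_topology (\<lambda>_. discrete_topology UNIV) S) W \<and> x \<in> W
    \<and> (\<forall>y\<in>W. \<forall>i\<in>F. y i = x i)"
proof (intro exI conjI)
  define V where "V i = (if i \<in> F then {x i} else UNIV)" for i
  have "finite {i\<in>S. V i \<noteq> UNIV}"
    by (rule finite_subset[OF _ assms(2)]) (auto simp: V_def)
  then show "openin (product_topology (\<lambda>_. discrete_topology UNIV) S) (PiE S V)"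
    by (simp add: openin_PiE_gen)
  show "x \<in> PiE S V" using assms(1) by (simp add: V_def PiE_iff)
  show "\<forall>y\<in>PiE S V. \<forall>i\<in>F. y i = x i"
  proof (intro ballI)
    fix y i assume "y \<in> PiE S V" "i \<in> F"
    then have "y i \<in> V i" using assms(3) by (auto intro: PiE_mem)
    then show "y i = x i" using \<open>i \<in> F\<close> by (simp add: V_def)
  qed
qed

lemma discrete_product_open_contains_agree:
  fixes x :: "'i \<Rightarrow> 'b"
  assumes "openin (product_topology (\<lambda>_. discrete_topology UNIV) S) W" "x \<in> W"
  shows "\<exists>F. finite F \<and> F \<subseteq> S \<and> (\<forall>y\<in>extensional S. (\<forall>i\<in>F. y i = x i) \<longrightarrow> y \<in> W)"
proof -
  obtain V where V: "x \<in> PiE S V" "finite {i. V i \<noteq> UNIV}" "PiE S V \<subseteq> W"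
    using product_topology_open_contains_basis[OF assms] by auto
  have "y \<in> PiE S V" if "y \<in> extensional S" "\<forall>i\<in>{i\<in>S. V i \<noteq> UNIV}. y i = x i" for y
  proof (rule PiE_I)
    fix i assume "i \<in> S"
    then show "y i \<in> V i"
      using that(2) PiE_mem[OF V(1)] by (cases "V i = UNIV") auto
  next
    fix i assume "i \<notin> S"
    then show "y i = undefined" using that(1) by (simp add: extensional_def)
  qed
  moreover have "finite {i\<in>S. V i \<noteq> UNIV}" using V(2) by (rule rev_finite_subset) blast
  ultimately show ?thesis using V(3) by (intro exI[of _ "{i\<in>S. V i \<noteq> UNIV}"]) blast
qed

lemma in_closure_of_discrete_product_iff:
  fixes x :: "'i \<Rightarrow> 'b" and T :: "('i \<Rightarrow> 'b) set"
  assumes "T \<subseteq> extensional S"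
  shows "x \<in> product_topology (\<lambda>_. discrete_topology UNIV) S closure_of T
    \<longleftrightarrow> x \<in> extensional S \<and> (\<forall>F. finite F \<and> F \<subseteq> S \<longrightarrow> (\<exists>y\<in>T. \<forall>i\<in>F. y i = x i))"
proof -
  let ?X = "product_topology (\<lambda>_. discrete_topology (UNIV :: 'b set)) S"
  have "topspace ?X = extensional S"
    by (auto simp: PiE_iff extensional_def)
  moreover have open_approx: "(\<forall>W. x \<in> W \<and> openin ?X W \<longrightarrow> (\<exists>y. y \<in> T \<and> y \<in> W))
      \<longleftrightarrow> (\<forall>F. finite F \<and> F \<subseteq> S \<longrightarrow> (\<exists>y\<in>T. \<forall>i\<in>F. y i = x i))"
    if x: "x \<in> extensional S"
  proof (intro iffI allI impI)
    fix F assume cl: "\<forall>W. x \<in> W \<and> openin ?X W \<longrightarrow> (\<exists>y. y \<in> T \<and> y \<in> W)"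
      and F: "finite F \<and> F \<subseteq> S"
    obtain W where "openin ?X W" "x \<in> W" and agree: "\<forall>y\<in>W. \<forall>i\<in>F. y i = x i"
      using discrete_product_nhd_agree[OF x, of F] F by blast
    then obtain y where "y \<in> T" "y \<in> W" using cl by blast
    then show "\<exists>y\<in>T. \<forall>i\<in>F. y i = x i" using agree by blast
  next
    fix W assume approx: "\<forall>F. finite F \<and> F \<subseteq> S \<longrightarrow> (\<exists>y\<in>T. \<forall>i\<in>F. y i = x i)"
      and W: "x \<in> W \<and> openin ?X W"
    then obtain F where "finite F" "F \<subseteq> S"
      and sub: "\<forall>y\<in>extensional S. (\<forall>i\<in>F. y i = x i) \<longrightarrow> y \<in> W"
      using discrete_product_open_contains_agree[of S W x] by blast
    then obtain y where "y \<in> T" "\<forall>i\<in>F. y i = x i" using approx by blast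
    then show "\<exists>y. y \<in> T \<and> y \<in> W" using sub assms by blast
  qed
  ultimately show ?thesis
    unfolding in_closure_of by (cases "x \<in> extensional S") simp_all
qed

lemma charF_in_closure_of_iff:
  "charF arF arR s p \<in> cantorF arF arR s closure_of (charF arF arR s ` P)
    \<longleftrightarrow> (\<forall>F. finite F \<and> F \<subseteq> Fsent arF arR s \<longrightarrow> (\<exists>q\<in>P. F \<inter> q = F \<inter> p))"
proof -
  have agree: "(\<forall>\<phi>\<in>F. charF arF arR s q \<phi> = charF arF arR s p \<phi>) \<longleftrightarrow> F \<inter> q = F \<inter> p"
    if "F \<subseteq> Fsent arF arR s" for F q
    using that unfolding charF_def by auto
  have ext: "charF arF arR s ` P \<subseteq> extensional (Fsent arF arR s)"
    "charF arF arR s p \<in> extensional (Fsent arF arR s)"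
    by (auto simp: charF_def)
  show ?thesis
    unfolding cantorF_def in_closure_of_discrete_product_iff[OF ext(1)] using ext(2) agree
    by (simp add: image_iff)
qed

lemma charF_ulim_in_closure_of:
  assumes "ultrafilter_on J U" "J \<subseteq> I"
  shows "charF arF arR s (ulim J U T) \<in> cantorF arF arR s closure_of (charF arF arR s ` T ` I)"
  unfolding charF_in_closure_of_iff
proof (intro allI impI)
  fix F assume "finite F \<and> F \<subseteq> Fsent arF arR s"
  then obtain j where "j \<in> J" "F \<inter> T j = F \<inter> ulim J U T"
    using ulim_agrees_on_finite[OF assms(1), of F T] by blast
  then show "\<exists>q\<in>T ` I. F \<inter> q = F \<inter> ulim J U T" using assms(2) by blast
qed

lemma ex_ultrafilter_ulim_eq_if_in_closure_of:
  assumes "p \<subseteq> Fsent arF arR s" "\<forall>i\<in>I. T i \<subseteq> Fsent arF arR s"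
    and "charF arF arR s p \<in> cantorF arF arR s closure_of (charF arF arR s ` T ` I)"
  shows "\<exists>G. ultrafilter_on I G \<and> ulim I G T = p"
proof (rule ex_ultrafilter_ulim_eq[OF assms(1,2)])
  show "\<forall>F. finite F \<and> F \<subseteq> Fsent arF arR s \<longrightarrow> (\<exists>i\<in>I. F \<inter> T i = F \<inter> p)"
    using assms(3) unfolding charF_in_closure_of_iff by simp
qed

theorem lemma2p27:
  fixes arF :: "'f \<Rightarrow> nat" and arR :: "'r \<Rightarrow> nat" and s :: "'k \<Rightarrow> nat"
    and A :: "'i \<Rightarrow> ('a, 'f, 'r) struc" and R :: "'i \<Rightarrow> 'k \<Rightarrow> 'a list set"
    and I J :: "'i set" and U :: "'i set set"
  assumes kappa_inf: "infinite (UNIV :: 'k set)"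
    and s_mult: "\<forall>n. {k. s k = n} \<approx> (UNIV :: 'k set)"
    and structs: "\<forall>i\<in>I. is_struc arF arR (A i)"
    and kinds: "\<forall>i\<in>I. kind s (A i) (R i)"
    and JI: "J \<subseteq> I"
    and ultra: "ultrafilter_on J U"
  shows "charF arF arR s (tp arF arR s (uprod J U A) (\<lambda>k. up_rel J U A (\<lambda>j. R j k)))
           \<in> (cantorF arF arR s) closure_of (charF arF arR s ` (\<lambda>i. tp arF arR s (A i) (R i)) ` I)
       \<and> (\<forall>p. p \<subseteq> Fsent arF arR s \<and>
           charF arF arR s p \<in> (cantorF arF arR s) closure_of (charF arF arR s ` (\<lambda>i. tp arF arR s (A i) (R i)) ` I)
         \<longrightarrow> (\<exists>L G S. L \<subseteq> I \<and> ultrafilter_on L G \<and> (\<forall>l\<in>L. kind s (A l) (S l))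
               \<and> tp arF arR s (uprod L G A) (\<lambda>k. up_rel L G A (\<lambda>l. S l k)) = p))"
proof -
  let ?T = "\<lambda>i. tp arF arR s (A i) (R i)"
  have tp_uprod_ulim: "tp arF arR s (uprod L G A) (\<lambda>k. up_rel L G A (\<lambda>l. R l k)) = ulim L G ?T"
    if "ultrafilter_on L G" "L \<subseteq> I" for L G
    using that structs kinds by (intro tp_uprod[OF that(1)]) auto
  have types: "\<forall>i\<in>I. ?T i \<subseteq> Fsent arF arR s" by (auto simp: tp_def)
  show ?thesis
  proof (intro conjI allI impI)
    show "charF arF arR s (tp arF arR s (uprod J U A) (\<lambda>k. up_rel J U A (\<lambda>j. R j k)))
        \<in> cantorF arF arR s closure_of (charF arF arR s ` ?T ` I)"
      unfolding tp_uprod_ulim[OF ultra JI] by (rule charF_ulim_in_closure_of[OF ultra JI])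
  next
    fix p assume "p \<subseteq> Fsent arF arR s
      \<and> charF arF arR s p \<in> cantorF arF arR s closure_of (charF arF arR s ` ?T ` I)"
    then obtain G where "ultrafilter_on I G" "ulim I G ?T = p"
      using ex_ultrafilter_ulim_eq_if_in_closure_of[OF _ types] by blast
    then show "\<exists>L G S. L \<subseteq> I \<and> ultrafilter_on L G \<and> (\<forall>l\<in>L. kind s (A l) (S l))
        \<and> tp arF arR s (uprod L G A) (\<lambda>k. up_rel L G A (\<lambda>l. S l k)) = p"
      using kinds tp_uprod_ulim[of I G] by (intro exI[of _ I] exI[of _ G] exI[of _ R]) simp
  qed
qed

end
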